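(* Let $n\ge1$. A valid configuration in $\Omega'_n$ contains neither of the junction tiles $j_n^{0,0,1,1}$ and $j_n^{1,1,0,0}$.
   Context: $V_n=\{(v_0,v_1,v_2)\in\mathbb{Z}^3: 0\le v_0\le v_1\le 1,\ v_1\le v_2\le n+1\}$, elements written as words $v_0v_1v_2$. A Wang tile is $t=(a,b,c,d)$ with $\mathrm{RIGHT}(t)=a$, $\mathrm{TOP}(t)=b$, $\mathrm{LEFT}(t)=c$, $\mathrm{BOTTOM}(t)=d$; $\hat t=(b,a,d,c)$, $\hat S=\{\hat t:t\in S\}$. Define (as (right, top, left, bottom)): $W_n=\{(11(i+1),11(j+1),11i,11j):1\le i,j\le n\}$; $B'_n=\{(00(i+1),111,00i,11n):0\le i\le n\}$; $G_n=\{(01(i+1),111,00i,11(n+1)):0\le i\le n\}$; $Y_n=\{(01(i+1),112,01i,11(n+1)):1\le i\le n\}$; $A_n=\{(00(i+1),112,01i,11n):1\le i\le n\}$; $j_n^{k,l,r,s}=((0,k,l),(0,r,s),(0,s,r+n),(0,l,k+n))$ for $(k,l),(r,s)\in\{(0,0),(0,1),(1,1)\}$ (so $j_n^{0,0,1,1}=(000,011,01(n+1),00n)$ and $j_n^{1,1,0,0}=(011,000,00n,01(n+1))$); $J'_n$ is the set of these 9 tiles. $\mathcal T'_n=W_n\cup B'_n\cup G_n\cup Y_n\cup A_n\cup\hat B'_n\cup\hat G_n\cup\hat Y_n\cup\hat A_n\cup J'_n$. $\Omega'_n$ is the set of configurations $c:\mathbb Z^2\to\mathcal T'_n$ with $\mathrm{RIGHT}(c(\mathbf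 m))=\mathrm{LEFT}(c(\mathbf m+\mathbf e_1))$ and $\mathrm{TOP}(c(\mathbf m))=\mathrm{BOTTOM}(c(\mathbf m+\mathbf e_2))$ for all $\mathbf m$. *)

theory Defs
  imports Main
begin

type_synonym label = "int \<times> int \<times> int"
type_synonym tile = "label \<times> label \<times> label \<times> label"

definition Vn :: "nat \<Rightarrow> label set" where
  "Vn n = {(v0, v1, v2). 0 \<le> v0 \<and> v0 \<le> v1 \<and> v1 \<le> 1 \<and> v1 \<le> v2 \<and> v2 \<le> int n + 1}"

definition RIGHT :: "tile \<Rightarrow> label" where "RIGHT t = (case t of (a,b,c,d) \<Rightarrow> a)"
definition TOP :: "tile \<Rightarrow> label" where "TOP t = (case t of (a,b,c,d) \<Rightarrow> b)"
definition LEFT :: "tile \<Rightarrow> label" where "LEFT t = (case t of (a,b,c,d) \<Rightarrow> c)"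
definition BOTTOM :: "tile \<Rightarrow> label" where "BOTTOM t = (case t of (a,b,c,d) \<Rightarrow> d)"

definition hat :: "tile \<Rightarrow> tile" where
  "hat t = (case t of (a,b,c,d) \<Rightarrow> (b,a,d,c))"

definition Wn :: "nat \<Rightarrow> tile set" where
  "Wn n = {((1,1,i+1),(1,1,j+1),(1,1,i),(1,1,j)) | i j. 1 \<le> i \<and> i \<le> int n \<and> 1 \<le> j \<and> j \<le> int n}"

definition Bpn :: "nat \<Rightarrow> tile set" where
  "Bpn n = {((0,0,i+1),(1,1,1),(0,0,i),(1,1,int n)) | i. 0 \<le> i \<and> i \<le> int n}"

definition Gn :: "nat \<Rightarrow> tile set" where
  "Gn n = {((0,1,i+1),(1,1,1),(0,0,i),(1,1,int n+1)) | i. 0 \<le> i \<and> i \<le> int n}"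

definition Yn :: "nat \<Rightarrow> tile set" where
  "Yn n = {((0,1,i+1),(1,1,2),(0,1,i),(1,1,int n+1)) | i. 1 \<le> i \<and> i \<le> int n}"

definition An :: "nat \<Rightarrow> tile set" where
  "An n = {((0,0,i+1),(1,1,2),(0,1,i),(1,1,int n)) | i. 1 \<le> i \<and> i \<le> int n}"

definition jn :: "nat \<Rightarrow> int \<Rightarrow> int \<Rightarrow> int \<Rightarrow> int \<Rightarrow> tile" where
  "jn n k l r s = ((0,k,l),(0,r,s),(0,s,r + int n),(0,l,k + int n))"

definition KL :: "(int \<times> int) set" where "KL = {(0,0),(0,1),(1,1)}"

definition Jpn :: "nat \<Rightarrow> tile set" where
  "Jpn n = {jn n k l r s | k l r s. (k,l) \<in> KL \<and> (r,s) \<in> KL}"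

definition Tpn :: "nat \<Rightarrow> tile set" where
  "Tpn n = Wn n \<union> Bpn n \<union> Gn n \<union> Yn n \<union> An n
         \<union> hat ` Bpn n \<union> hat ` Gn n \<union> hat ` Yn n \<union> hat ` An n \<union> Jpn n"

definition Omegap :: "nat \<Rightarrow> (int \<times> int \<Rightarrow> tile) set" where
  "Omegap n = {c. (\<forall>m. c m \<in> Tpn n) \<and>
     (\<forall>x y. RIGHT (c (x,y)) = LEFT (c (x+1,y)) \<and> TOP (c (x,y)) = BOTTOM (c (x,y+1)))}"

end

theory Submission
  imports Defs
begin

text \<open>
  Suppose \<open>jn n 0 0 1 1\<close> sits at \<open>(x0, y0)\<close>. For \<open>n \<ge> 2\<close> look at the two rows starting
  to the right of it and of the tile above it. In the lower row the left labels are counters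
  \<open>(0, _, k)\<close>, and every such tile with \<open>k < n\<close> has a top label starting with 1; this forces the
  upper row to consist of \<open>W\<^sub>n\<close> tiles with left labels \<open>(1, 1, k + 2)\<close>. The counter reaches
  \<open>n - 1\<close> while the upper label would have to become \<open>(1, 1, n + 1)\<close>, which no \<open>W\<^sub>n\<close> tile carries.
  For \<open>n = 1\<close> the 2x2 block to the lower left of the junction tile cannot be filled.
  Finally \<open>jn n 1 1 0 0\<close> is the image of \<open>jn n 0 0 1 1\<close> under \<open>hat\<close>, and transposing a
  configuration while applying \<open>hat\<close> to every tile preserves \<open>Omegap n\<close>.
\<close>

lemma Tpn_cases:
  assumes "t \<in> Tpn n"
  obtains (W) i j where "t = ((1,1,i+1),(1,1,j+1),(1,1,i),(1,1,j))" "1\<le>i" "i\<le>int n" "1\<le>j" "j\<le>int n"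
  | (B) i where "t = ((0,0,i+1),(1,1,1),(0,0,i),(1,1,int n))" "0\<le>i" "i\<le>int n"
  | (G) i where "t = ((0,1,i+1),(1,1,1),(0,0,i),(1,1,int n+1))" "0\<le>i" "i\<le>int n"
  | (Y) i where "t = ((0,1,i+1),(1,1,2),(0,1,i),(1,1,int n+1))" "1\<le>i" "i\<le>int n"
  | (A) i where "t = ((0,0,i+1),(1,1,2),(0,1,i),(1,1,int n))" "1\<le>i" "i\<le>int n"
  | (hat_B) i where "t = ((1,1,1),(0,0,i+1),(1,1,int n),(0,0,i))" "0\<le>i" "i\<le>int n"
  | (hat_G) i where "t = ((1,1,1),(0,1,i+1),(1,1,int n+1),(0,0,i))" "0\<le>i" "i\<le>int n"
  | (hat_Y) i where "t = ((1,1,2),(0,1,i+1),(1,1,int n+1),(0,1,i))" "1\<le>i" "i\<le>int n"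
  | (hat_A) i where "t = ((1,1,2),(0,0,i+1),(1,1,int n),(0,1,i))" "1\<le>i" "i\<le>int n"
  | (J) k l r s where "t = jn n k l r s" "(k,l) \<in> KL" "(r,s) \<in> KL"
proof -
  from assms consider "t \<in> Wn n" | "t \<in> Bpn n" | "t \<in> Gn n" | "t \<in> Yn n" | "t \<in> An n"
    | "t \<in> hat ` Bpn n" | "t \<in> hat ` Gn n" | "t \<in> hat ` Yn n" | "t \<in> hat ` An n" | "t \<in> Jpn n"
    unfolding Tpn_def by blast
  then show ?thesis
  proof cases
    case 1 with W show ?thesis unfolding Wn_def by blast
  next
    case 2 with B show ?thesis unfolding Bpn_def by blast
  next
    case 3 with G show ?thesis unfolding Gn_def by blast
  next
    case 4 with Y show ?thesis unfolding Yn_def by blast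
  next
    case 5 with A show ?thesis unfolding An_def by blast
  next
    case 6 with hat_B show ?thesis unfolding Bpn_def hat_def by auto
  next
    case 7 with hat_G show ?thesis unfolding Gn_def hat_def by auto
  next
    case 8 with hat_Y show ?thesis unfolding Yn_def hat_def by auto
  next
    case 9 with hat_A show ?thesis unfolding An_def hat_def by auto
  next
    case 10 with J show ?thesis unfolding Jpn_def by blast
  qed
qed

lemmas tile_sides = RIGHT_def TOP_def LEFT_def BOTTOM_def

lemma Tpn_LEFT_counter:
  assumes "t \<in> Tpn n" "LEFT t = (0,a,k)" "0 \<le> k" "k < int n"
  shows "fst (TOP t) = 1 \<and> (\<exists>a'. RIGHT t = (0,a',k+1))"
  using assms(1) by (cases rule: Tpn_cases) (use assms(2-) in \<open>auto simp: tile_sides jn_def KL_def\<close>)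

lemma Tpn_LEFT_white:
  assumes "t \<in> Tpn n" "LEFT t = (1,1,i)" "fst (BOTTOM t) = 1"
  shows "i \<le> int n \<and> RIGHT t = (1,1,i+1)"
  using assms(1) by (cases rule: Tpn_cases) (use assms(2-) in \<open>auto simp: tile_sides jn_def KL_def\<close>)

lemma Tpn_BOTTOM_011:
  assumes "t \<in> Tpn n" "2 \<le> n" "BOTTOM t = (0,1,1)"
  shows "RIGHT t = (1,1,2)"
  using assms(1) by (cases rule: Tpn_cases) (use assms(2-) in \<open>auto simp: tile_sides jn_def KL_def\<close>)

lemma Tpn_RIGHT_01n:
  assumes "t \<in> Tpn n" "1 \<le> n" "RIGHT t = (0,1,int n+1)"
  shows "BOTTOM t = (1,1,int n+1)"
  using assms(1) by (cases rule: Tpn_cases) (use assms(2-) in \<open>auto simp: tile_sides jn_def KL_def\<close>)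

lemma Tpn_TOP_00n:
  assumes "t \<in> Tpn n" "1 \<le> n" "TOP t = (0,0,int n)"
  shows "LEFT t \<in> {(1,1,int n),(0,1,int n)}"
  using assms(1) by (cases rule: Tpn_cases) (use assms(2-) in \<open>auto simp: tile_sides jn_def KL_def\<close>)

lemma Tpn1_TOP_112:
  assumes "t \<in> Tpn 1" "TOP t = (1,1,2)"
  shows "RIGHT t \<notin> {(1,1,1),(0,1,1)}"
  using assms(1) by (cases rule: Tpn_cases) (use assms(2-) in \<open>auto simp: tile_sides jn_def KL_def\<close>)

lemma OmegapD:
  assumes "c \<in> Omegap n"
  shows "c m \<in> Tpn n" "RIGHT (c (x,y)) = LEFT (c (x+1,y))" "TOP (c (x,y)) = BOTTOM (c (x,y+1))"
  using assms unfolding Omegap_def by blast+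

lemma jn_sides:
  "RIGHT (jn n k l r s) = (0,k,l)" "TOP (jn n k l r s) = (0,r,s)"
  "LEFT (jn n k l r s) = (0,s,r + int n)" "BOTTOM (jn n k l r s) = (0,l,k + int n)"
  by (simp_all add: jn_def tile_sides)

lemma counter_strip_step:
  assumes c: "c \<in> Omegap n"
    and low: "LEFT (c (x,y)) = (0,a,k)" "0 \<le> k" "k < int n"
    and up: "LEFT (c (x,y+1)) = (1,1,k+2)"
  shows "k + 2 \<le> int n \<and> (\<exists>a'. LEFT (c (x+1,y)) = (0,a',k+1)) \<and> LEFT (c (x+1,y+1)) = (1,1,k+3)"
proof -
  obtain a' where top: "fst (TOP (c (x,y))) = 1" and right: "RIGHT (c (x,y)) = (0,a',k+1)"
    using Tpn_LEFT_counter[OF OmegapD(1)[OF c] low] by blast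
  have "fst (BOTTOM (c (x,y+1))) = 1"
    using top OmegapD(3)[OF c, of x y] by simp
  then have "k + 2 \<le> int n \<and> RIGHT (c (x,y+1)) = (1,1,k+3)"
    using Tpn_LEFT_white[OF OmegapD(1)[OF c] up] by (simp add: add.assoc)
  then show ?thesis
    using right OmegapD(2)[OF c, of x y] OmegapD(2)[OF c, of x "y+1"] by auto
qed

lemma jn_0011_absent_ge2:
  assumes n: "2 \<le> n" and c: "c \<in> Omegap n"
  shows "c (x0,y0) \<noteq> jn n 0 0 1 1"
proof
  assume j: "c (x0,y0) = jn n 0 0 1 1"
  have "LEFT (c (x0+1,y0)) = (0,0,0)"
    using OmegapD(2)[OF c, of x0 y0] j by (simp add: jn_sides)
  moreover have "LEFT (c (x0+1,y0+1)) = (1,1,2)"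
    using OmegapD(3)[OF c, of x0 y0] OmegapD(2)[OF c, of x0 "y0+1"] j
      Tpn_BOTTOM_011[OF OmegapD(1)[OF c] n] by (simp add: jn_sides)
  ultimately have strip: "(\<exists>a. LEFT (c (x0+1+int k,y0)) = (0,a,int k))
      \<and> LEFT (c (x0+1+int k,y0+1)) = (1,1,int k+2)" if "k < n" for k
    using that
  proof (induction k)
    case (Suc k)
    then obtain a where "LEFT (c (x0+1+int k,y0)) = (0,a,int k)"
      and "LEFT (c (x0+1+int k,y0+1)) = (1,1,int k+2)" by auto
    from counter_strip_step[OF c this(1) _ _ this(2)] Suc.prems
    show ?case by (simp add: add_ac)
  qed auto
  from strip[of "n-1"] n obtain a where
    "LEFT (c (x0+1+int (n-1),y0)) = (0,a,int (n-1))"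
    "LEFT (c (x0+1+int (n-1),y0+1)) = (1,1,int (n-1)+2)" by auto
  from counter_strip_step[OF c this(1) _ _ this(2)] n show False by simp
qed

lemma jn_0011_absent_1:
  assumes c: "c \<in> Omegap 1"
  shows "c (x0,y0) \<noteq> jn 1 0 0 1 1"
proof
  assume j: "c (x0,y0) = jn 1 0 0 1 1"
  have "BOTTOM (c (x0-1,y0)) = (1,1,2)"
    using OmegapD(2)[OF c, of "x0-1" y0] j Tpn_RIGHT_01n[OF OmegapD(1)[OF c]]
    by (simp add: jn_sides)
  then have corner: "RIGHT (c (x0-1,y0-1)) \<notin> {(1,1,1),(0,1,1)}"
    using OmegapD(3)[OF c, of "x0-1" "y0-1"] Tpn1_TOP_112[OF OmegapD(1)[OF c]] by simp
  have "LEFT (c (x0,y0-1)) \<in> {(1,1,1),(0,1,1)}"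
    using OmegapD(3)[OF c, of x0 "y0-1"] j Tpn_TOP_00n[OF OmegapD(1)[OF c]]
    by (simp add: jn_sides)
  with corner show False
    using OmegapD(2)[OF c, of "x0-1" "y0-1"] by simp
qed

lemma jn_0011_absent:
  assumes "1 \<le> n" "c \<in> Omegap n"
  shows "c m \<noteq> jn n 0 0 1 1"
proof -
  obtain x0 y0 where m: "m = (x0,y0)" by (cases m)
  consider "n = 1" | "2 \<le> n" using assms(1) by linarith
  then show ?thesis
  proof cases
    case 1
    with m show ?thesis using jn_0011_absent_1 assms(2) by simp
  next
    case 2
    with m show ?thesis using jn_0011_absent_ge2 assms(2) by simp
  qed
qed

lemma hat_hat [simp]: "hat (hat t) = t"
  by (cases t) (simp add: hat_def)

lemma hat_sides [simp]:
  "RIGHT (hat t) = TOP t" "TOP (hat t) = RIGHT t" "LEFT (hat t) = BOTTOM t" "BOTTOM (hat t) = LEFT t"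
  by (cases t; simp add: hat_def tile_sides)+

lemma hat_jn: "hat (jn n k l r s) = jn n r s k l"
  by (simp add: hat_def jn_def)

lemma hat_in_Tpn:
  assumes "t \<in> Tpn n"
  shows "hat t \<in> Tpn n"
proof -
  have "hat ` Wn n \<subseteq> Wn n"
    by (auto simp: Wn_def hat_def)
  moreover have "hat ` Jpn n \<subseteq> Jpn n"
    unfolding Jpn_def by (blast intro: hat_jn)
  ultimately show ?thesis
    using assms unfolding Tpn_def by (auto simp: image_iff)
qed

lemma transpose_in_Omegap:
  assumes "c \<in> Omegap n"
  shows "(\<lambda>(x,y). hat (c (y,x))) \<in> Omegap n"
  using OmegapD[OF assms] by (auto simp: Omegap_def hat_in_Tpn)

theorem lemma7p3:
  fixes n :: nat and c :: "int \<times> int \<Rightarrow> tile"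
  assumes "n \<ge> 1" and "c \<in> Omegap n"
  shows "\<forall>m. c m \<noteq> jn n 0 0 1 1 \<and> c m \<noteq> jn n 1 1 0 0"
proof
  fix m :: "int \<times> int"
  obtain x y where m: "m = (x,y)" by (cases m)
  have "(\<lambda>(x,y). hat (c (y,x))) (y,x) \<noteq> jn n 0 0 1 1"
    using jn_0011_absent[OF assms(1) transpose_in_Omegap[OF assms(2)]] .
  then have "c m \<noteq> jn n 1 1 0 0"
    using m hat_jn[of n 1 1 0 0] by auto
  with jn_0011_absent[OF assms] show "c m \<noteq> jn n 0 0 1 1 \<and> c m \<noteq> jn n 1 1 0 0" by blast
qed

end
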